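(* Let $p$ be an odd prime, let $C_p$ be the cycle graph on $p$ vertices with adjacency matrix $A$, and let $a,b$ be any (possibly equal) vertices. Then there is a region $R\subseteq\mathbb{C}$ such that the curve $t\mapsto \exp(\mathrm{i}tA)_{a,b}$, $t\ge 0$, is dense in $R$ (as $t\to\infty$), and $R$ is invariant under the rotation of the plane about the origin by angle $2\pi/p$ (that is, $R$ has $p$-fold rotational symmetry). *)

theory Defs
  imports "HOL-Analysis.Analysis" "HOL-Computational_Algebra.Primes"
begin

text \<open>Square matrices of size n are represented as functions nat => nat => complex,
  only entries with indices below n being relevant.\<close>

definition mat_mult :: "nat \<Rightarrow> (nat \<Rightarrow> nat \<Rightarrow> complex) \<Rightarrow> (nat \<Rightarrow> nat \<Rightarrow> complex) \<Rightarrow> (nat \<Rightarrow> nat \<Rightarrow> complex)" where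
  "mat_mult n A B = (\<lambda>i j. \<Sum>k<n. A i k * B k j)"

definition mat_id :: "nat \<Rightarrow> nat \<Rightarrow> complex" where
  "mat_id = (\<lambda>i j. if i = j then 1 else 0)"

fun mat_pow :: "nat \<Rightarrow> (nat \<Rightarrow> nat \<Rightarrow> complex) \<Rightarrow> nat \<Rightarrow> (nat \<Rightarrow> nat \<Rightarrow> complex)" where
  "mat_pow n A 0 = mat_id"
| "mat_pow n A (Suc k) = mat_mult n (mat_pow n A k) A"

definition mat_exp :: "nat \<Rightarrow> (nat \<Rightarrow> nat \<Rightarrow> complex) \<Rightarrow> (nat \<Rightarrow> nat \<Rightarrow> complex)" where
  "mat_exp n A = (\<lambda>i j. \<Sum>k. mat_pow n A k i j / of_nat (fact k))"

definition cycle_adj :: "nat \<Rightarrow> nat \<Rightarrow> nat \<Rightarrow> complex" where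
  "cycle_adj p i j = (if i < p \<and> j < p \<and> ((i + 1) mod p = j \<or> (j + 1) mod p = i) then 1 else 0)"

definition cycle_walk :: "nat \<Rightarrow> real \<Rightarrow> nat \<Rightarrow> nat \<Rightarrow> complex" where
  "cycle_walk p t a b = mat_exp p (\<lambda>i j. \<i> * complex_of_real t * cycle_adj p i j) a b"

end

(*
  The discrete Fourier transform diagonalises the adjacency matrix A of C_p: with
  \<omega> = e^(2\<pi>i/p) and \<lambda>_k = 2 cos (2\<pi>k/p),
    exp(itA)_ab = (1/p) \<Sum>_(k<p) \<omega>^(k(a-b)) e^(it\<lambda>_k).
  Write p = 2m + 1. As \<lambda>_(p-k) = \<lambda>_k, only \<lambda>_0 = 2 and \<lambda>_1, ..., \<lambda>_m matter, and the
  irreducibility of 1 + x + ... + x^(p-1) makes \<lambda>_1, ..., \<lambda>_m linearly independent over the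
  rationals. Kronecker's theorem then gives arbitrarily large t with t\<lambda>_k close to
  s\<lambda>_k + 2\<pi>j/p modulo 2\<pi> for k = 1..m, and because \<lambda>_0 = -2(\<lambda>_1 + ... + \<lambda>_m) and
  -2m = 1 (mod p) the same holds for k = 0. So every rotation \<omega>^j exp(isA)_ab is a limit point
  of the curve, and the union R of all rotations of the curve by powers of \<omega> works.
*)

theory Submission
  imports Defs "HOL-Computational_Algebra.Polynomial_Factorial"
begin

section \<open>Spectral decomposition of the walk on the cycle\<close>

(* For fixed k, the vector
   (fourier_mode p k i) (i < p) is an eigenvector of the adjacency matrix of C_p with
   eigenvalue cycle_eigenvalue p k. *)
definition fourier_mode :: "nat \<Rightarrow> nat \<Rightarrow> int \<Rightarrow> complex" where
  "fourier_mode p k d = cis (2 * pi * real k * real_of_int d / real p)"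

definition cycle_eigenvalue :: "nat \<Rightarrow> nat \<Rightarrow> real" where
  "cycle_eigenvalue p k = 2 * cos (2 * pi * real k / real p)"

lemma fourier_mode_eqI:
  assumes "int p dvd d - d'"
  shows "fourier_mode p k d = fourier_mode p k d'"
proof (cases "p = 0")
  case False
  from assms obtain e where "d - d' = int p * e" by (rule dvdE)
  then have "d = d' + int p * e" by simp
  then have "2 * pi * real k * real_of_int d / real p
      = 2 * pi * real k * real_of_int d' / real p + 2 * pi * real_of_int (int k * e)"
    using False by (simp add: field_simps)
  then show ?thesis
    unfolding fourier_mode_def by (simp add: cis_mult[symmetric])
qed (use assms in simp)

lemma fourier_mode_power: "fourier_mode p k d = cis (2 * pi * real_of_int d / real p) ^ k"
  unfolding fourier_mode_def Complex.DeMoivre by (rule arg_cong[where f = cis]) (simp add: field_simps)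

lemma sum_fourier_mode:
  assumes "p > 0"
  shows "(\<Sum>k<p. fourier_mode p k d) = (if int p dvd d then of_nat p else 0)"
proof -
  define z where "z = cis (2 * pi * real_of_int d / real p)"
  have "z = 1 \<longleftrightarrow> int p dvd d"
  proof
    assume "z = 1"
    then have "exp (\<i> * of_real (2 * pi * real_of_int d / real p)) = 1"
      by (simp add: z_def cis_conv_exp)
    then obtain n :: int where "2 * pi * real_of_int d / real p = of_int (2 * n) * pi"
      by (auto simp: exp_eq_1)
    then have "real_of_int d = real_of_int (n * int p)"
      using assms by (simp add: field_simps)
    then show "int p dvd d" by (simp only: of_int_eq_iff dvd_triv_right)
  next
    assume "int p dvd d"
    then show "z = 1"
      using fourier_mode_eqI[of p d 0 1] unfolding z_def fourier_mode_def by simp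
  qed
  moreover have "z ^ p = 1"
    using assms unfolding z_def Complex.DeMoivre by simp
  ultimately show ?thesis
    by (simp add: fourier_mode_power z_def[symmetric] sum_gp_strict)
qed

lemma fourier_mode_neighbours:
  "fourier_mode p k (d - 1) + fourier_mode p k (d + 1)
     = of_real (cycle_eigenvalue p k) * fourier_mode p k d"
proof -
  define x where "x = 2 * pi * real k / real p"
  have "fourier_mode p k (d - 1) = fourier_mode p k d * cis (- x)"
       "fourier_mode p k (d + 1) = fourier_mode p k d * cis x"
    unfolding fourier_mode_def x_def cis_mult
    by (rule arg_cong[where f = cis], cases "p = 0", simp_all add: field_simps)+
  moreover have "cis (- x) + cis x = of_real (cycle_eigenvalue p k)"
    unfolding cycle_eigenvalue_def x_def by (simp add: complex_eq_iff)
  ultimately show ?thesis by (metis distrib_left mult.commute)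
qed

lemma add_1_mod_less: "(x::nat) < p \<Longrightarrow> (x + 1) mod p = (if x + 1 = p then 0 else x + 1)"
  by auto

lemma add_pred_mod_less:
  fixes b p :: nat
  assumes "b < p"
  shows "(b + p - 1) mod p = (if b = 0 then p - 1 else b - 1)"
proof (cases "b = 0")
  case False
  then have "b + p - 1 = b - 1 + p"
    by simp
  then have "(b + p - 1) mod p = (b - 1 + p) mod p"
    by (simp only:)
  also have "\<dots> = b - 1"
    using assms by simp
  finally show ?thesis
    using False by simp
qed (use assms in simp)

lemma sum_cycle_adj:
  assumes "p \<ge> 3" and "b < p"
  shows "(\<Sum>c<p. f c * cycle_adj p c b) = f ((b + 1) mod p) + f ((b + p - 1) mod p)"
proof -
  define succ pred where "succ = (b + 1) mod p" and "pred = (b + p - 1) mod p"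
  have succ_pred: "succ < p" "pred < p" "succ \<noteq> pred"
    using assms unfolding succ_def pred_def add_1_mod_less[OF assms(2)] add_pred_mod_less[OF assms(2)]
    by auto
  have "cycle_adj p c b = (if c = succ then 1 else 0) + (if c = pred then 1 else 0)" if "c < p" for c
    using that assms succ_pred(3) unfolding cycle_adj_def succ_def pred_def
      add_1_mod_less[OF assms(2)] add_1_mod_less[OF that] add_pred_mod_less[OF assms(2)]
    by auto
  then have "(\<Sum>c<p. f c * cycle_adj p c b)
      = (\<Sum>c<p. (if c = succ then f c else 0) + (if c = pred then f c else 0))"
    by (intro sum.cong) (auto simp: distrib_left)
  also have "\<dots> = f succ + f pred"
    using succ_pred by (simp add: sum.distrib)
  finally show ?thesis unfolding succ_def pred_def .
qed

lemma fourier_mode_cycle_adj: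
  assumes "p \<ge> 3" and "b < p"
  shows "(\<Sum>c<p. fourier_mode p k (d - int c) * cycle_adj p c b)
           = of_real (cycle_eigenvalue p k) * fourier_mode p k (d - int b)"
proof -
  have "fourier_mode p k (d - int ((b + 1) mod p)) = fourier_mode p k ((d - int b) - 1)"
    by (rule fourier_mode_eqI) (simp add: of_nat_mod algebra_simps)
  moreover have "fourier_mode p k (d - int ((b + p - 1) mod p)) = fourier_mode p k ((d - int b) + 1)"
    unfolding add_pred_mod_less[OF assms(2)] using assms
    by (intro fourier_mode_eqI) (simp add: of_nat_diff)
  ultimately show ?thesis
    using fourier_mode_neighbours[of p k "d - int b"] by (simp add: sum_cycle_adj assms add.commute)
qed

lemma mat_pow_cycle_adj:
  assumes "p \<ge> 3" and "i < p" and "b < p"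
  shows "mat_pow p (\<lambda>i j. c * cycle_adj p i j) n i b
    = (\<Sum>k<p. (c * of_real (cycle_eigenvalue p k)) ^ n * fourier_mode p k (int i - int b)) / of_nat p"
  using assms(3)
proof (induction n arbitrary: b)
  case 0
  have "int p dvd int i - int b \<longleftrightarrow> i = b"
    using \<open>i < p\<close> \<open>b < p\<close> dvd_imp_le_int[of "int i - int b" "int p"] by (cases "i = b") auto
  then show ?case
    using assms(1) by (simp add: mat_id_def sum_fourier_mode)
next
  case (Suc n)
  define z where "z k = c * of_real (cycle_eigenvalue p k)" for k
  have "mat_pow p (\<lambda>i j. c * cycle_adj p i j) (Suc n) i b
     = (\<Sum>c'<p. (\<Sum>k<p. z k ^ n * fourier_mode p k (int i - int c')) / of_nat p * (c * cycle_adj p c' b))"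
    by (simp add: mat_mult_def Suc.IH z_def)
  also have "\<dots> = (\<Sum>c'<p. \<Sum>k<p. z k ^ n * c / of_nat p * (fourier_mode p k (int i - int c') * cycle_adj p c' b))"
    by (simp add: sum_distrib_left sum_distrib_right sum_divide_distrib mult_ac)
  also have "\<dots> = (\<Sum>k<p. z k ^ n * c / of_nat p
                      * (\<Sum>c'<p. fourier_mode p k (int i - int c') * cycle_adj p c' b))"
    by (subst sum.swap) (simp add: sum_distrib_left)
  also have "\<dots> = (\<Sum>k<p. z k ^ Suc n * fourier_mode p k (int i - int b)) / of_nat p"
    by (simp only: fourier_mode_cycle_adj[OF assms(1) Suc.prems])
      (simp add: sum_divide_distrib z_def mult_ac)
  finally show ?case unfolding z_def .
qed

lemma cycle_walk_spectral:
  assumes "p \<ge> 3" and "a < p" and "b < p"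
  shows "cycle_walk p t a b
           = (\<Sum>k<p. fourier_mode p k (int a - int b) * cis (t * cycle_eigenvalue p k)) / of_nat p"
proof -
  define z where "z k = \<i> * of_real t * of_real (cycle_eigenvalue p k)" for k
  define u where "u k = fourier_mode p k (int a - int b) / of_nat p" for k
  have "(\<lambda>n. mat_pow p (\<lambda>i j. \<i> * of_real t * cycle_adj p i j) n a b / of_nat (fact n))
      = (\<lambda>n. \<Sum>k<p. u k * (z k ^ n /\<^sub>R fact n))"
    by (rule ext, subst mat_pow_cycle_adj[OF assms])
      (simp add: z_def u_def sum_divide_distrib sum_distrib_left scaleR_conv_of_real divide_inverse mult_ac)
  moreover have "(\<lambda>n. \<Sum>k<p. u k * (z k ^ n /\<^sub>R fact n)) sums (\<Sum>k<p. u k * exp (z k))"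
    by (intro sums_sum sums_mult exp_converges)
  ultimately have "cycle_walk p t a b = (\<Sum>k<p. u k * exp (z k))"
    unfolding cycle_walk_def mat_exp_def by (simp add: sums_iff)
  then show ?thesis
    by (simp add: u_def z_def cis_conv_exp sum_divide_distrib mult_ac)
qed

section \<open>Irreducibility of 1 + x + ... + x^(p-1)\<close>

definition geom_poly :: "nat \<Rightarrow> int poly" where
  "geom_poly p = (\<Sum>k<p. monom 1 k)"

lemma coeff_geom_poly: "coeff (geom_poly p) j = (if j < p then 1 else 0)"
  unfolding geom_poly_def coeff_sum coeff_monom by (simp add: sum.delta')

lemma degree_geom_poly: "p > 0 \<Longrightarrow> degree (geom_poly p) = p - 1"
  by (intro antisym degree_le le_degree) (auto simp: coeff_geom_poly)

lemma lead_coeff_geom_poly: "p > 0 \<Longrightarrow> lead_coeff (geom_poly p) = 1"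
  by (simp add: degree_geom_poly coeff_geom_poly)

lemma geom_poly_shift: "pCons 0 (pcompose (geom_poly p) [:1, 1:]) = [:1, 1:] ^ p - 1"
proof -
  have "geom_poly p * [:-1, 1:] = (\<Sum>k<p. monom 1 (Suc k) - monom 1 k)"
    unfolding geom_poly_def sum_distrib_right
    by (intro sum.cong refl) (simp add: monom_altdef algebra_simps)
  also have "\<dots> = monom 1 p - 1"
    by (simp add: sum_lessThan_telescope monom_0 one_pCons)
  finally have "pcompose (geom_poly p * [:-1, 1:]) [:1, 1:] = pcompose (monom 1 p - 1) [:1, 1:]"
    by simp
  moreover have "pcompose (monom (1::int) p) [:1, 1:] = [:1, 1:] ^ p"
    by (induction p) (simp_all add: monom_Suc pcompose_pCons monom_0 pcompose_1 one_pCons[symmetric])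
  ultimately show ?thesis
    by (simp add: pcompose_mult pcompose_pCons pcompose_diff pcompose_1 mult_pCons_right)
qed

lemma coeff_geom_poly_shift:
  "k < p \<Longrightarrow> coeff (pcompose (geom_poly p) [:1, 1:]) k = int (p choose Suc k)"
  using arg_cong[OF geom_poly_shift, of "\<lambda>q. coeff q (Suc k)"]
  by (simp add: coeff_linear_poly_power)

lemma prime_dvd_low_coeffs_imp_degree_0:
  fixes G H :: "int poly" and q :: int
  assumes "prime q" and dvd_coeffs: "\<forall>k<degree (G * H). q dvd coeff (G * H) k"
    and "\<not> q dvd lead_coeff G" and "\<not> q dvd coeff H 0"
  shows "degree H = 0"
proof (rule ccontr)
  assume "degree H \<noteq> 0"
  define i where "i = (LEAST i. \<not> q dvd coeff G i)"
  have not_dvd_i: "\<not> q dvd coeff G i"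
    unfolding i_def by (rule LeastI[of _ "degree G"]) fact
  have dvd_below_i: "q dvd coeff G j" if "j < i" for j
    using not_less_Least[of j "\<lambda>i. \<not> q dvd coeff G i"] that unfolding i_def by blast
  have "i \<le> degree G"
    unfolding i_def by (rule Least_le) fact
  moreover have "G \<noteq> 0" "H \<noteq> 0" using assms(3) \<open>degree H \<noteq> 0\<close> by auto
  then have "degree (G * H) = degree G + degree H" by (rule degree_mult_eq)
  ultimately have "q dvd coeff (G * H) i"
    using dvd_coeffs \<open>degree H \<noteq> 0\<close> by simp
  moreover have "coeff (G * H) i = (\<Sum>j<i. coeff G j * coeff H (i - j)) + coeff G i * coeff H 0"
    unfolding coeff_mult lessThan_Suc_atMost[symmetric] by (simp add: sum.lessThan_Suc)
  moreover have "q dvd (\<Sum>j<i. coeff G j * coeff H (i - j))"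
    by (intro dvd_sum) (simp add: dvd_below_i)
  ultimately have "q dvd coeff G i * coeff H 0"
    by (metis dvd_add_right_iff)
  with assms(1,4) not_dvd_i show False
    by (simp add: prime_dvd_mult_iff)
qed

lemma Eisenstein_criterion:
  fixes G H :: "int poly" and q :: int
  assumes "prime q" and "\<forall>k<degree (G * H). q dvd coeff (G * H) k"
    and "\<not> q ^ 2 dvd coeff (G * H) 0" and "\<not> q dvd lead_coeff (G * H)"
  shows "degree G = 0 \<or> degree H = 0"
proof -
  have "\<not> q dvd lead_coeff G" "\<not> q dvd lead_coeff H"
    using assms(4) by (auto simp: lead_coeff_mult)
  moreover have "\<not> q dvd coeff G 0 \<or> \<not> q dvd coeff H 0"
    using assms(3) mult_dvd_mono[of q "coeff G 0" q "coeff H 0"]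
    by (auto simp: coeff_mult power2_eq_square)
  ultimately show ?thesis
    using prime_dvd_low_coeffs_imp_degree_0[OF assms(1,2)]
      prime_dvd_low_coeffs_imp_degree_0[of q H G] assms(1,2)
    by (auto simp: mult.commute)
qed

lemma irreducible_geom_poly:
  assumes "prime p"
  shows "irreducible (geom_poly p)"
proof (rule irreducibleI)
  have "p \<ge> 2" using assms prime_ge_2_nat by blast
  then show "geom_poly p \<noteq> 0" "\<not> geom_poly p dvd 1"
    using lead_coeff_geom_poly[of p] degree_geom_poly[of p]
    by (auto simp: is_unit_poly_iff)
  fix G H assume factor: "geom_poly p = G * H"
  define \<Psi> where "\<Psi> = pcompose (geom_poly p) [:1, 1:]"
  have \<Psi>_factor: "\<Psi> = pcompose G [:1, 1:] * pcompose H [:1, 1:]"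
    unfolding \<Psi>_def factor by (rule pcompose_mult)
  have "degree \<Psi> = p - 1"
    using \<open>p \<ge> 2\<close> by (simp add: \<Psi>_def degree_pcompose degree_geom_poly)
  have coeff_\<Psi>: "coeff \<Psi> k = int (p choose Suc k)" if "k < p" for k
    unfolding \<Psi>_def using that by (rule coeff_geom_poly_shift)
  have "\<forall>k<degree \<Psi>. int p dvd coeff \<Psi> k"
    using \<open>degree \<Psi> = p - 1\<close> assms by (auto simp: coeff_\<Psi> dvd_choose_prime)
  moreover have "\<not> (int p) ^ 2 dvd coeff \<Psi> 0"
    using \<open>p \<ge> 2\<close> by (simp add: coeff_\<Psi> power2_eq_square)
  moreover have "lead_coeff \<Psi> = 1"
    using \<open>p \<ge> 2\<close> \<open>degree \<Psi> = p - 1\<close> by (simp add: coeff_\<Psi>)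
  ultimately have "degree (pcompose G [:1, 1:]) = 0 \<or> degree (pcompose H [:1, 1:]) = 0"
    using assms \<open>p \<ge> 2\<close> by (intro Eisenstein_criterion) (auto simp: \<Psi>_factor[symmetric])
  then have "degree G = 0 \<or> degree H = 0"
    by (simp add: degree_pcompose)
  moreover have "lead_coeff G * lead_coeff H = 1"
    using lead_coeff_geom_poly[of p] \<open>p \<ge> 2\<close> by (simp add: factor lead_coeff_mult)
  then have "lead_coeff G dvd 1" "lead_coeff H dvd 1"
    by (metis dvdI mult.commute)+
  ultimately show "G dvd 1 \<or> H dvd 1"
    by (auto elim!: degree_eq_zeroE simp: is_unit_const_poly_iff)
qed

section \<open>Rational independence of the eigenvalues\<close>

lemma map_poly_of_int_add: "map_poly of_int (P + Q) = map_poly of_int P + map_poly of_int Q"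
  by (simp add: poly_eq_iff coeff_map_poly)

lemma map_poly_of_int_diff: "map_poly of_int (P - Q) = map_poly of_int P - map_poly of_int Q"
  by (simp add: poly_eq_iff coeff_map_poly)

lemma map_poly_of_int_mult: "map_poly of_int (P * Q) = map_poly of_int P * map_poly of_int Q"
  by (simp add: poly_eq_iff coeff_map_poly coeff_mult)

lemma map_poly_of_int_sum: "map_poly of_int (\<Sum>k\<in>A. f k) = (\<Sum>k\<in>A. map_poly of_int (f k))"
  by (simp add: poly_eq_iff coeff_map_poly coeff_sum)

lemma prime_poly_root_imp_degree_le:
  fixes P Q :: "int poly" and z :: "'a::{comm_ring_1,ring_char_0}"
  assumes "prime_elem P" and "poly (map_poly of_int P) z = 0"
    and "Q \<noteq> 0" and "poly (map_poly of_int Q) z = 0"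
  shows "degree P \<le> degree Q"
proof -
  define vanishes where "vanishes g \<longleftrightarrow> g \<noteq> 0 \<and> poly (map_poly of_int g) z = 0" for g :: "int poly"
  obtain g where "vanishes g" and g_min: "\<And>h. vanishes h \<Longrightarrow> degree g \<le> degree h"
    using ex_has_least_nat[of vanishes Q degree] assms(3,4) unfolding vanishes_def by blast
  then have "g \<noteq> 0" and g_root: "poly (map_poly of_int g) z = 0"
    unfolding vanishes_def by auto
  define r where "r = pseudo_mod P g"
  obtain a s where "a \<noteq> 0" and division: "smult a P = g * s + r"
    using pseudo_mod(1)[OF \<open>g \<noteq> 0\<close>, of P] unfolding r_def by blast
  have "poly (map_poly of_int r) z = 0"
    using arg_cong[OF division, of "\<lambda>f. poly (map_poly of_int f) z"] assms(2) g_root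
    by (simp add: map_poly_of_int_add map_poly_of_int_mult map_poly_smult)
  then have "r = 0"
    using pseudo_mod(2)[OF \<open>g \<noteq> 0\<close>, of P] g_min[of r] unfolding vanishes_def r_def[symmetric]
    by linarith
  then have "g * s = P * [:a:]"
    using division by simp
  then have "P dvd g * s"
    by (metis dvd_triv_left)
  then consider "P dvd g" | "P dvd s"
    using assms(1) by (auto simp: prime_elem_dvd_mult_iff)
  then show ?thesis
  proof cases
    case 1
    then show ?thesis
      using dvd_imp_degree_le[OF 1 \<open>g \<noteq> 0\<close>] g_min[of Q] assms(3,4) unfolding vanishes_def by simp
  next
    case 2
    then obtain u where "s = P * u" by (rule dvdE)
    with \<open>g * s = P * [:a:]\<close> have "P * (g * u) = P * [:a:]"
      by (simp add: mult.left_commute)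
    with assms(1) have "g * u = [:a:]"
      by (metis mult_left_cancel prime_elem_def)
    then have "degree g = 0"
      using \<open>a \<noteq> 0\<close> \<open>g \<noteq> 0\<close>
      by (metis add_is_0 degree_mult_eq degree_pCons_0 mult_zero_right pCons_eq_0_iff)
    then show ?thesis
      using \<open>g \<noteq> 0\<close> g_root by (auto elim!: degree_eq_zeroE simp: map_poly_pCons)
  qed
qed

lemma poly_geom_poly_root_of_unity:
  assumes "p > 1"
  shows "poly (map_poly of_int (geom_poly p)) (cis (2 * pi / real p)) = 0"
proof -
  have "poly (map_poly of_int (geom_poly p)) (cis (2 * pi / real p)) = (\<Sum>k<p. fourier_mode p k 1)"
    unfolding geom_poly_def map_poly_of_int_sum
    by (simp add: map_poly_monom poly_sum poly_monom fourier_mode_power)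
  also have "\<dots> = 0"
    using assms by (simp add: sum_fourier_mode)
  finally show ?thesis .
qed

lemma int_poly_root_of_unity_eq_0:
  assumes "prime p" and "poly (map_poly of_int Q) (cis (2 * pi / real p)) = 0"
    and "degree Q < p - 1"
  shows "Q = 0"
proof (rule ccontr)
  assume "Q \<noteq> 0"
  have "prime_elem (geom_poly p)"
    using assms(1) by (intro irreducible_imp_prime_poly irreducible_geom_poly)
  moreover have "p > 1"
    using assms(1) prime_gt_1_nat by blast
  ultimately have "degree (geom_poly p) \<le> degree Q"
    using prime_poly_root_imp_degree_le poly_geom_poly_root_of_unity \<open>Q \<noteq> 0\<close> assms(2) by blast
  with assms(3) \<open>p > 1\<close> show False
    by (simp add: degree_geom_poly)
qed

lemma cycle_eigenvalue_conv_root_of_unity: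
  assumes "k \<le> p" and "p > 0"
  shows "of_real (cycle_eigenvalue p k) = cis (2 * pi / real p) ^ k + cis (2 * pi / real p) ^ (p - k)"
proof -
  have "real (p - k) * (2 * pi / real p) = 2 * pi - real k * (2 * pi / real p)"
    using assms by (simp add: field_simps of_nat_diff)
  moreover have "2 * pi * real k / real p = real k * (2 * pi / real p)"
    by simp
  ultimately show ?thesis
    unfolding cycle_eigenvalue_def Complex.DeMoivre by (simp only:) (simp add: complex_eq_iff)
qed

lemma coeff_sum_reflected_monoms:
  fixes n :: "nat \<Rightarrow> int"
  assumes p_eq: "p = 2 * m + 1" and "m \<ge> 1"
  defines "P \<equiv> \<Sum>i<m. monom (n i) (Suc i) + monom (n i) (p - Suc i)"
  shows "coeff P 0 = 0" and "coeff P (p - 1) = n 0" and "\<And>j. j \<ge> p \<Longrightarrow> coeff P j = 0"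
    and "\<And>j. j < m \<Longrightarrow> coeff P (Suc j) = n j"
proof -
  have coeff_P: "coeff P j = (\<Sum>i<m. (if j = Suc i then n i else 0) + (if j = p - Suc i then n i else 0))"
    for j unfolding P_def coeff_sum by (auto simp: coeff_monom intro!: sum.cong)
  show "coeff P 0 = 0" "\<And>j. j \<ge> p \<Longrightarrow> coeff P j = 0"
    unfolding coeff_P using p_eq by (auto intro!: sum.neutral)
  have "coeff P (p - 1) = (\<Sum>i<m. if i = 0 then n i else 0)"
    unfolding coeff_P using p_eq by (intro sum.cong) auto
  then show "coeff P (p - 1) = n 0"
    using \<open>m \<ge> 1\<close> by simp
  fix j assume "j < m"
  then have "coeff P (Suc j) = (\<Sum>i<m. if i = j then n i else 0)"
    unfolding coeff_P using p_eq by (intro sum.cong) auto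
  then show "coeff P (Suc j) = n j"
    using \<open>j < m\<close> by simp
qed

lemma cycle_eigenvalues_independent:
  fixes n :: "nat \<Rightarrow> int"
  assumes "prime p" and p_eq: "p = 2 * m + 1"
    and "(\<Sum>i<m. of_int (n i) * cycle_eigenvalue p (Suc i)) = 0"
    and "k < m"
  shows "n k = 0"
proof -
  define \<zeta> where "\<zeta> = cis (2 * pi / real p)"
  define P where "P = (\<Sum>i<m. monom (n i) (Suc i) + monom (n i) (p - Suc i))"
  have "m \<ge> 1"
    using assms(1) p_eq by (cases m) auto
  note coeff_P = coeff_sum_reflected_monoms[OF p_eq \<open>m \<ge> 1\<close>, where n = n, folded P_def]
  have "poly (map_poly of_int P) \<zeta> = (\<Sum>i<m. of_int (n i) * (\<zeta> ^ Suc i + \<zeta> ^ (p - Suc i)))"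
    unfolding P_def map_poly_of_int_sum
    by (simp add: map_poly_of_int_add map_poly_monom poly_sum poly_monom algebra_simps)
  also have "\<dots> = of_real (\<Sum>i<m. of_int (n i) * cycle_eigenvalue p (Suc i))"
    unfolding \<zeta>_def using p_eq by (simp add: cycle_eigenvalue_conv_root_of_unity)
  finally have P_root: "poly (map_poly of_int P) \<zeta> = 0"
    using assms(3) by simp
  \<comment> \<open>\<open>P\<close> has no constant term, so subtracting \<open>n 0 \<cdot> geom_poly p\<close> cancels its top
    coefficient.\<close>
  define Q where "Q = P - smult (n 0) (geom_poly p)"
  have "degree Q \<le> p - 2"
  proof (rule degree_le, intro allI impI)
    fix j assume "p - 2 < j"
    then have "j = p - 1 \<or> j \<ge> p"
      using p_eq by auto
    then show "coeff Q j = 0"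
      using coeff_P(2,3) p_eq by (auto simp: Q_def coeff_geom_poly)
  qed
  moreover have "poly (map_poly of_int Q) \<zeta> = 0"
    using P_root poly_geom_poly_root_of_unity[of p] p_eq \<open>m \<ge> 1\<close>
    unfolding Q_def \<zeta>_def by (simp add: map_poly_of_int_diff map_poly_smult)
  ultimately have "Q = 0"
    using assms(1) p_eq \<open>m \<ge> 1\<close> unfolding \<zeta>_def by (intro int_poly_root_of_unity_eq_0) auto
  then have "P = 0"
    using coeff_P(1) arg_cong[OF \<open>Q = 0\<close>, of "\<lambda>f. coeff f 0"] p_eq
    by (simp add: Q_def coeff_geom_poly)
  then show ?thesis
    using coeff_P(4)[OF assms(4)] by simp
qed

lemma inj_on_cycle_eigenvalue:
  assumes "p = 2 * m + 1"
  shows "inj_on (\<lambda>i. cycle_eigenvalue p (Suc i)) {..<m}"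
proof (rule inj_onI)
  have angle_range: "0 \<le> 2 * pi * real (Suc l) / real p \<and> 2 * pi * real (Suc l) / real p \<le> pi"
    if "l \<in> {..<m}" for l
  proof -
    have "pi * (2 * real l + 2) \<le> pi * (2 * real m + 1)"
      using that by (intro mult_left_mono) auto
    then show ?thesis
      using assms by (simp add: field_simps)
  qed
  fix i i' assume "i \<in> {..<m}" "i' \<in> {..<m}"
    and "cycle_eigenvalue p (Suc i) = cycle_eigenvalue p (Suc i')"
  then have "cos (2 * pi * real (Suc i) / real p) = cos (2 * pi * real (Suc i') / real p)"
    unfolding cycle_eigenvalue_def by simp
  then have "2 * pi * real (Suc i) / real p = 2 * pi * real (Suc i') / real p"
    using angle_range \<open>i \<in> {..<m}\<close> \<open>i' \<in> {..<m}\<close> by (meson cos_inj_pi)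
  then show "i = i'"
    using assms by simp
qed

lemma int_module_independent_imageI:
  fixes \<theta> :: "'a \<Rightarrow> real"
  assumes "finite S" and "inj_on \<theta> S"
    and "\<And>n. (\<Sum>i\<in>S. of_int (n i) * \<theta> i) = 0 \<Longrightarrow> \<forall>i\<in>S. n i = 0"
  shows "module.independent (\<lambda>r. (*) (real_of_int r)) (\<theta> ` S)"
proof -
  interpret Modules.module "\<lambda>r. (*) (real_of_int r)"
    by unfold_locales (simp_all add: algebra_simps)
  show ?thesis
    unfolding independent_explicit_module
  proof (intro allI impI)
    fix T u v assume T: "finite T" "T \<subseteq> \<theta> ` S" "(\<Sum>v\<in>T. real_of_int (u v) * v) = 0" "v \<in> T"
    define n where "n i = (if \<theta> i \<in> T then u (\<theta> i) else 0)" for i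
    define A where "A = {i \<in> S. \<theta> i \<in> T}"
    have "\<theta> ` A = T"
      using T(2) unfolding A_def by auto
    moreover have "inj_on \<theta> A"
      using assms(2) unfolding A_def by (rule inj_on_subset) auto
    ultimately have "(\<Sum>v\<in>T. real_of_int (u v) * v) = (\<Sum>i\<in>A. real_of_int (u (\<theta> i)) * \<theta> i)"
      using sum.reindex[of \<theta> A "\<lambda>v. real_of_int (u v) * v"] by simp
    also have "\<dots> = (\<Sum>i\<in>S. of_int (n i) * \<theta> i)"
      unfolding n_def A_def using assms(1) by (auto simp: sum.inter_filter intro!: sum.cong)
    finally have "\<forall>i\<in>S. n i = 0"
      using T(3) assms(3) by simp
    moreover obtain i where "i \<in> S" "v = \<theta> i"
      using T(2,4) by auto
    ultimately show "u v = 0"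
      using T(4) unfolding n_def by auto
  qed
qed

section \<open>Simultaneous approximation of the phases\<close>

lemma cycle_eigenvalue_reflect:
  assumes "k \<le> p"
  shows "cycle_eigenvalue p (p - k) = cycle_eigenvalue p k"
proof (cases "p = 0")
  case False
  then have "2 * pi * real (p - k) / real p = 2 * pi - 2 * pi * real k / real p"
    using assms by (simp add: field_simps of_nat_diff)
  then show ?thesis unfolding cycle_eigenvalue_def by simp
qed (use assms in simp)

lemma sum_cycle_eigenvalues:
  assumes "p > 1"
  shows "(\<Sum>k<p. cycle_eigenvalue p k) = 0"
proof -
  have "(\<Sum>k<p. cycle_eigenvalue p k) = 2 * Re (\<Sum>k<p. fourier_mode p k 1)"
    unfolding cycle_eigenvalue_def fourier_mode_def by (simp add: sum_distrib_left Re_sum)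
  then show ?thesis
    using assms by (simp add: sum_fourier_mode)
qed

lemma sum_cycle_eigenvalues_half:
  assumes "p = 2 * m + 1" and "m \<ge> 1"
  shows "(\<Sum>i<m. cycle_eigenvalue p (Suc i)) = -1"
proof -
  let ?ev = "cycle_eigenvalue p"
  have split: "(\<Sum>i<m + n. g i) = (\<Sum>i<m. g i) + (\<Sum>i<n. g (m + i))" for n and g :: "nat \<Rightarrow> real"
    by (induction n) simp_all
  have "0 = (\<Sum>k<Suc (m + m). ?ev k)"
    using sum_cycle_eigenvalues[of p] assms by (simp add: mult_2)
  also have "\<dots> = ?ev 0 + (\<Sum>i<m + m. ?ev (Suc i))"
    by (rule sum.lessThan_Suc_shift)
  also have "(\<Sum>i<m + m. ?ev (Suc i)) = (\<Sum>i<m. ?ev (Suc i)) + (\<Sum>i<m. ?ev (Suc (m + i)))"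
    by (rule split)
  also have "(\<Sum>i<m. ?ev (Suc (m + i))) = (\<Sum>i<m. ?ev (Suc (m - Suc i)))"
  proof (intro sum.cong refl)
    fix i assume "i \<in> {..<m}"
    then have "Suc (m + i) = p - Suc (m - Suc i)" and "Suc (m - Suc i) \<le> p"
      using assms by auto
    then show "?ev (Suc (m + i)) = ?ev (Suc (m - Suc i))"
      by (simp only: cycle_eigenvalue_reflect)
  qed
  also have "\<dots> = (\<Sum>i<m. ?ev (Suc i))"
    by (rule sum.nat_diff_reindex)
  finally have "0 = ?ev 0 + ((\<Sum>i<m. ?ev (Suc i)) + (\<Sum>i<m. ?ev (Suc i)))" .
  moreover have "?ev 0 = 2"
    by (simp add: cycle_eigenvalue_def)
  ultimately show ?thesis
    by linarith
qed

lemma Kronecker_approx_large_time: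
  fixes \<alpha> \<theta> :: "nat \<Rightarrow> real"
  assumes "module.independent (\<lambda>r. (*) (real_of_int r)) (\<theta> ` {..<n})"
    and "inj_on \<theta> {..<n}" and "\<epsilon> > 0"
  obtains t h where "t \<ge> T" and "\<And>i. i < n \<Longrightarrow> \<bar>t * \<theta> i - of_int (h i) - \<alpha> i\<bar> < \<epsilon>"
proof -
  obtain t0 h0 where h0: "\<And>i. i < n \<Longrightarrow> \<bar>t0 * \<theta> i - of_int (h0 i) - \<alpha> i\<bar> < \<epsilon> / 2"
    using Kronecker_thm_1[OF assms(1,2), of "\<epsilon> / 2"] assms(3) by auto
  obtain N :: nat where "N > 0" and "1 / real N < \<epsilon> / 2"
    using ex_inverse_of_nat_less[of "\<epsilon> / 2"] assms(3) by (auto simp: inverse_eq_divide)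
  \<comment> \<open>Shift \<open>t0\<close> by a multiple \<open>q K \<ge> T + \<bar>t0\<bar>\<close> for which all \<open>q K \<theta> i\<close>
    are nearly integral (Dirichlet).\<close>
  define K :: nat where "K = nat \<lceil>T + \<bar>t0\<bar>\<rceil>"
  obtain q P where "q > 0" and P: "\<And>i. i < n \<Longrightarrow> \<bar>of_int q * (real K * \<theta> i) - of_int (P i)\<bar> < 1 / real N"
    using Dirichlet_approx_simult[OF \<open>N > 0\<close>, where \<theta> = "\<lambda>i. real K * \<theta> i" and n = n] by blast
  show thesis
  proof (rule that)
    have "real_of_int q * real K \<ge> real K"
      using \<open>q > 0\<close> by (simp add: mult_le_cancel_right1)
    then show "t0 + real_of_int q * real K \<ge> T"
      unfolding K_def by linarith
    fix i assume "i < n"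
    have "(t0 + real_of_int q * real K) * \<theta> i - of_int (h0 i + P i) - \<alpha> i
        = (t0 * \<theta> i - of_int (h0 i) - \<alpha> i) + (of_int q * (real K * \<theta> i) - of_int (P i))"
      by (simp add: algebra_simps)
    then show "\<bar>(t0 + real_of_int q * real K) * \<theta> i - of_int (h0 i + P i) - \<alpha> i\<bar> < \<epsilon>"
      using h0[OF \<open>i < n\<close>] P[OF \<open>i < n\<close>] \<open>1 / real N < \<epsilon> / 2\<close> by linarith
  qed
qed

lemma cycle_eigenphases_approx:
  assumes "prime p" and "p = 2 * m + 1" and "\<delta> > 0"
  obtains t H where "t \<ge> T"
    and "\<And>i. i < m \<Longrightarrow> \<bar>t * cycle_eigenvalue p (Suc i) - (s * cycle_eigenvalue p (Suc i) + \<phi>)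
                         - 2 * pi * of_int (H i)\<bar> < \<delta>"
proof -
  define \<theta> where "\<theta> i = cycle_eigenvalue p (Suc i) / (2 * pi)" for i
  have "inj_on \<theta> {..<m}"
    using inj_on_cycle_eigenvalue[OF assms(2)] unfolding \<theta>_def inj_on_def by simp
  have "module.independent (\<lambda>r. (*) (real_of_int r)) (\<theta> ` {..<m})"
  proof (rule int_module_independent_imageI)
    fix n :: "nat \<Rightarrow> int" assume "(\<Sum>i<m. of_int (n i) * \<theta> i) = 0"
    then have "(\<Sum>i<m. of_int (n i) * cycle_eigenvalue p (Suc i)) = 0"
      unfolding \<theta>_def by (simp add: sum_divide_distrib[symmetric])
    then show "\<forall>i\<in>{..<m}. n i = 0"
      using cycle_eigenvalues_independent[OF assms(1,2)] by blast
  qed (use \<open>inj_on \<theta> {..<m}\<close> in simp_all)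
  moreover note \<open>inj_on \<theta> {..<m}\<close>
  moreover have "\<delta> / (2 * pi) > 0"
    using assms(3) by simp
  ultimately obtain t H where "t \<ge> T"
    and H: "\<And>i. i < m \<Longrightarrow> \<bar>t * \<theta> i - of_int (H i) - (s * \<theta> i + \<phi> / (2 * pi))\<bar> < \<delta> / (2 * pi)"
    by (rule Kronecker_approx_large_time[where \<alpha> = "\<lambda>i. s * \<theta> i + \<phi> / (2 * pi)" and T = T]) blast
  show thesis
  proof (rule that[OF \<open>t \<ge> T\<close>])
    fix i assume "i < m"
    have "t * cycle_eigenvalue p (Suc i) - (s * cycle_eigenvalue p (Suc i) + \<phi>) - 2 * pi * of_int (H i)
        = 2 * pi * (t * \<theta> i - of_int (H i) - (s * \<theta> i + \<phi> / (2 * pi)))"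
      unfolding \<theta>_def by (simp add: field_simps)
    also have "\<bar>\<dots>\<bar> < 2 * pi * (\<delta> / (2 * pi))"
      using mult_strict_left_mono[OF H[OF \<open>i < m\<close>], of "2 * pi"] by (simp add: abs_mult)
    finally show "\<bar>t * cycle_eigenvalue p (Suc i) - (s * cycle_eigenvalue p (Suc i) + \<phi>)
                 - 2 * pi * of_int (H i)\<bar> < \<delta>"
      by simp
  qed
qed

lemma cycle_eigenphase_0_approx:
  fixes H :: "nat \<Rightarrow> int"
  assumes p_eq: "p = 2 * m + 1" and "m \<ge> 1" and \<phi>: "real p * \<phi> = 2 * pi * real j"
    and H: "\<And>i. i < m \<Longrightarrow> \<bar>t * cycle_eigenvalue p (Suc i) - (s * cycle_eigenvalue p (Suc i) + \<phi>)
                           - 2 * pi * of_int (H i)\<bar> < \<delta>"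
  shows "\<bar>t * cycle_eigenvalue p 0 - (s * cycle_eigenvalue p 0 + \<phi>)
           - 2 * pi * of_int (- (int j + 2 * (\<Sum>i<m. H i)))\<bar> < 2 * real m * \<delta>"
proof -
  let ?ev = "cycle_eigenvalue p"
  define D where "D i = t * ?ev (Suc i) - (s * ?ev (Suc i) + \<phi>) - 2 * pi * of_int (H i)" for i
  \<comment> \<open>As \<open>\<lambda>\<^sub>0 = 2 = -2 (\<lambda>\<^sub>1 + ... + \<lambda>\<^sub>m)\<close> and \<open>(2m + 1) \<phi> = 2\<pi>j\<close>,
    the error for \<open>\<lambda>\<^sub>0\<close> is \<open>-2\<close> times the sum of the others.\<close>
  have "real (2 * m + 1) * \<phi> = 2 * pi * real j"
    using p_eq \<phi> by simp
  moreover have "(\<Sum>i<m. D i) = t * (\<Sum>i<m. ?ev (Suc i)) - s * (\<Sum>i<m. ?ev (Suc i))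
      - real m * \<phi> - 2 * pi * (\<Sum>i<m. of_int (H i))"
    unfolding D_def by (simp add: sum_subtractf sum.distrib sum_distrib_left)
  ultimately have "t * ?ev 0 - (s * ?ev 0 + \<phi>) - 2 * pi * of_int (- (int j + 2 * (\<Sum>i<m. H i)))
      = - 2 * (\<Sum>i<m. D i)"
    unfolding sum_cycle_eigenvalues_half[OF p_eq \<open>m \<ge> 1\<close>]
    by (simp add: cycle_eigenvalue_def[of p 0] algebra_simps)
  also have "\<bar>\<dots>\<bar> \<le> 2 * (\<Sum>i<m. \<bar>D i\<bar>)"
    by (simp add: abs_mult sum_abs)
  also have "\<dots> < 2 * (\<Sum>i<m. \<delta>)"
    using H \<open>m \<ge> 1\<close> unfolding D_def
    by (intro mult_strict_left_mono sum_strict_mono) (auto simp: lessThan_empty_iff)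
  finally show ?thesis
    by simp
qed

lemma cycle_phases_approx:
  assumes "prime p" and "odd p" and "\<epsilon> > 0"
  obtains t where "t \<ge> T"
    and "\<And>k. k < p \<Longrightarrow> \<exists>h::int. \<bar>t * cycle_eigenvalue p k
            - (s * cycle_eigenvalue p k + 2 * pi * real j / real p) - 2 * pi * of_int h\<bar> < \<epsilon>"
proof -
  let ?ev = "cycle_eigenvalue p"
  define m where "m = p div 2"
  define \<phi> where "\<phi> = 2 * pi * real j / real p"
  have p_eq: "p = 2 * m + 1"
    using assms(2) unfolding m_def by simp
  have "m \<ge> 1"
    using prime_ge_2_nat[OF assms(1)] p_eq by linarith
  have "real p * \<phi> = 2 * pi * real j"
    using p_eq by (simp add: \<phi>_def)
  have "\<epsilon> / (2 * real m) > 0"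
    using \<open>m \<ge> 1\<close> assms(3) by simp
  then obtain t H where "t \<ge> T"
    and H: "\<And>i. i < m \<Longrightarrow> \<bar>t * ?ev (Suc i) - (s * ?ev (Suc i) + \<phi>) - 2 * pi * of_int (H i)\<bar> < \<epsilon> / (2 * real m)"
    by (rule cycle_eigenphases_approx[OF assms(1) p_eq, where T = T and s = s and \<phi> = \<phi>]) blast
  have "\<epsilon> / (2 * real m) \<le> \<epsilon>" and "2 * real m * (\<epsilon> / (2 * real m)) = \<epsilon>"
    using \<open>m \<ge> 1\<close> assms(3) by (simp_all add: field_simps)
  have low: "\<exists>h::int. \<bar>t * ?ev k - (s * ?ev k + \<phi>) - 2 * pi * of_int h\<bar> < \<epsilon>"
    if "1 \<le> k" "k \<le> m" for k
  proof -
    have "k - 1 < m" "Suc (k - 1) = k"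
      using that by auto
    then have "\<bar>t * ?ev k - (s * ?ev k + \<phi>) - 2 * pi * of_int (H (k - 1))\<bar> < \<epsilon> / (2 * real m)"
      using H[of "k - 1"] by simp
    then show ?thesis
      using \<open>\<epsilon> / (2 * real m) \<le> \<epsilon>\<close> by (intro exI[of _ "H (k - 1)"]) linarith
  qed
  have zero: "\<exists>h::int. \<bar>t * ?ev 0 - (s * ?ev 0 + \<phi>) - 2 * pi * of_int h\<bar> < \<epsilon>"
    using cycle_eigenphase_0_approx[OF p_eq \<open>m \<ge> 1\<close> \<open>real p * \<phi> = 2 * pi * real j\<close> H]
      \<open>2 * real m * (\<epsilon> / (2 * real m)) = \<epsilon>\<close> by metis
  show thesis
  proof (rule that[OF \<open>t \<ge> T\<close>, folded \<phi>_def])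
    fix k assume "k < p"
    then consider "k = 0" | "1 \<le> k" "k \<le> m" | "1 \<le> p - k" "p - k \<le> m"
      using p_eq by linarith
    then show "\<exists>h::int. \<bar>t * ?ev k - (s * ?ev k + \<phi>) - 2 * pi * of_int h\<bar> < \<epsilon>"
    proof cases
      case 3
      then show ?thesis
        using low[of "p - k"] cycle_eigenvalue_reflect[of k p] \<open>k < p\<close> by simp
    qed (use zero low in auto)
  qed
qed

lemma norm_cis_diff_le: "norm (cis x - cis y) \<le> \<bar>x - y\<bar>"
proof -
  define u where "u = (x - y) / 2"
  have "y + u + u = x" "y + u + - u = y" unfolding u_def by simp_all
  then have "cis x - cis y = cis (y + u) * (cis u - cis (- u))"
    by (simp add: right_diff_distrib cis_mult)
  also have "cis u - cis (- u) = 2 * \<i> * of_real (sin u)"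
    by (simp add: complex_eq_iff)
  finally have "norm (cis x - cis y) = 2 * \<bar>sin u\<bar>"
    by (simp add: norm_mult)
  also have "\<dots> \<le> 2 * \<bar>u\<bar>" by (simp add: abs_sin_x_le_abs_x)
  finally show ?thesis by (simp add: u_def)
qed

lemma norm_cis_diff_le_mod_2pi: "norm (cis x - cis y) \<le> \<bar>x - y - 2 * pi * of_int h\<bar>"
proof -
  have "cis (y + 2 * pi * of_int h) = cis y * cis (2 * pi * of_int h)"
    by (rule cis_mult[symmetric])
  then have "cis (y + 2 * pi * of_int h) = cis y" by simp
  then show ?thesis
    using norm_cis_diff_le[of x "y + 2 * pi * of_int h"] by (simp add: algebra_simps)
qed

lemma cycle_walk_approaches_rotation:
  assumes "prime p" and "odd p" and "a < p" and "b < p" and "e > 0"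
  obtains t where "t \<ge> T"
    and "dist (cycle_walk p t a b) (cis (2 * pi / real p) ^ j * cycle_walk p s a b) < e"
proof -
  let ?ev = "cycle_eigenvalue p" and ?c = "\<lambda>k. fourier_mode p k (int a - int b)"
  define \<phi> where "\<phi> = 2 * pi * real j / real p"
  have "p \<ge> 3"
    using prime_ge_2_nat[OF assms(1)] assms(2) by presburger
  obtain t where "t \<ge> T"
    and phases: "\<And>k. k < p \<Longrightarrow> \<exists>h::int. \<bar>t * ?ev k - (s * ?ev k + \<phi>) - 2 * pi * of_int h\<bar> < e"
    using cycle_phases_approx[OF assms(1,2,5)] unfolding \<phi>_def by metis
  have rotated: "cis (2 * pi / real p) ^ j * cycle_walk p s a b
      = (\<Sum>k<p. ?c k * cis (s * ?ev k + \<phi>)) / of_nat p"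
    unfolding cycle_walk_spectral[OF \<open>p \<ge> 3\<close> assms(3,4)] Complex.DeMoivre \<phi>_def
    by (simp add: sum_distrib_left cis_mult[symmetric] mult_ac)
  have "dist (cycle_walk p t a b) (cis (2 * pi / real p) ^ j * cycle_walk p s a b)
      = norm (\<Sum>k<p. ?c k * (cis (t * ?ev k) - cis (s * ?ev k + \<phi>))) / real p"
    unfolding dist_norm rotated cycle_walk_spectral[OF \<open>p \<ge> 3\<close> assms(3,4), where t = t]
      diff_divide_distrib[symmetric] right_diff_distrib sum_subtractf norm_divide
    by simp
  also have "\<dots> \<le> (\<Sum>k<p. norm (cis (t * ?ev k) - cis (s * ?ev k + \<phi>))) / real p"
    by (intro divide_right_mono order.trans[OF norm_sum] sum_mono) (simp_all add: norm_mult fourier_mode_def)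
  also have "\<dots> < (\<Sum>k<p. e) / real p"
  proof (intro divide_strict_right_mono sum_strict_mono)
    fix k assume "k \<in> {..<p}"
    then obtain h :: int where "\<bar>t * ?ev k - (s * ?ev k + \<phi>) - 2 * pi * of_int h\<bar> < e"
      using phases by auto
    then show "norm (cis (t * ?ev k) - cis (s * ?ev k + \<phi>)) < e"
      using norm_cis_diff_le_mod_2pi[of "t * ?ev k" "s * ?ev k + \<phi>" h] by linarith
  qed (use \<open>p \<ge> 3\<close> in \<open>auto simp: lessThan_empty_iff\<close>)
  also have "\<dots> = e"
    using \<open>p \<ge> 3\<close> by simp
  finally show thesis
    using that \<open>t \<ge> T\<close> by blast
qed

lemma image_mult_root_of_unity_orbit:
  fixes w :: "'a::monoid_mult"
  assumes "w ^ p = 1" and "p > 0"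
  shows "(\<lambda>z. w * z) ` {w ^ j * x |j x. x \<in> A} = {w ^ j * x |j x. x \<in> A}"
proof (intro equalityI subsetI)
  fix z assume "z \<in> (\<lambda>z. w * z) ` {w ^ j * x |j x. x \<in> A}"
  then obtain j x where "z = w ^ Suc j * x" "x \<in> A"
    by (auto simp: mult.assoc)
  then show "z \<in> {w ^ j * x |j x. x \<in> A}" by blast
next
  fix z assume "z \<in> {w ^ j * x |j x. x \<in> A}"
  then obtain j x where "z = w ^ j * x" "x \<in> A"
    by blast
  moreover have "w ^ j = w * w ^ (j + p - 1)"
    using assms by (simp add: power_Suc[symmetric] power_add del: power_Suc)
  ultimately show "z \<in> (\<lambda>z. w * z) ` {w ^ j * x |j x. x \<in> A}"
    by (auto simp: mult.assoc)
qed

theorem theorem4p2: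
  fixes p a b :: nat
  assumes "prime p" and "odd p" and "a < p" and "b < p"
  shows "\<exists>R :: complex set.
           (\<forall>t\<ge>0. cycle_walk p t a b \<in> R) \<and>
           (\<forall>T::real. R \<subseteq> closure ((\<lambda>t. cycle_walk p t a b) ` {T..})) \<and>
           (\<lambda>z. cis (2 * pi / real p) * z) ` R = R"
proof (intro exI conjI allI impI subsetI)
  let ?\<omega> = "cis (2 * pi / real p)"
  let ?R = "{?\<omega> ^ j * x |j x. x \<in> (\<lambda>t. cycle_walk p t a b) ` {0..}}"
  show "cycle_walk p t a b \<in> ?R" if "t \<ge> 0" for t
    using that by (intro CollectI exI[of _ "0::nat"] exI[of _ "cycle_walk p t a b"]) auto
  show "z \<in> closure ((\<lambda>t. cycle_walk p t a b) ` {T..})" if "z \<in> ?R" for T z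
  proof -
    from that obtain j s where z: "z = ?\<omega> ^ j * cycle_walk p s a b"
      by blast
    show ?thesis
      unfolding closure_approachable z
      using cycle_walk_approaches_rotation[OF assms] by (metis atLeast_iff image_eqI)
  qed
  have "?\<omega> ^ p = 1"
    using prime_gt_0_nat[OF assms(1)] by (simp add: Complex.DeMoivre)
  then show "(\<lambda>z. ?\<omega> * z) ` ?R = ?R"
    using prime_gt_0_nat[OF assms(1)] by (rule image_mult_root_of_unity_orbit)
qed

end
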